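(* Let $f:\{0,1\}^m\to\mathbb{R}$ (viewed as a set function on $2^{[m]}$) be non-negative, monotone non-decreasing and submodular, with marginals $f(S\cup\{i\})-f(S)\in[0,1]$ for all $S\subseteq[m]$, $i\notin S$. Let $t\in\mathbb{R}$ and $\theta<0$, and define $g_{t,\theta}(x)=e^{-\theta t}\,\mathbb{E}_{X\sim\mathcal{D}(x)}\big[e^{\theta f(X)}\big]$ for $x\in[0,1]^m$. Then for every $x\in[0,1]^m$ and all distinct $a,b\in[m]$, the function $z\mapsto g_{t,\theta}(x+z(e_a-e_b))$ is concave on the interval $\{z: x+z(e_a-e_b)\in[0,1]^m\}$.
   Context: For $x\in[0,1]^m$, $\mathcal{D}(x)$ denotes the product distribution on $\{0,1\}^m$ with $\Pr[X_i=1]=x_i$ independently; a vector in $\{0,1\}^m$ is identified with the subset of $[m]$ it indicates. $e_i$ is the $i$-th standard basis vector. *)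

theory Defs
  imports "HOL-Analysis.Analysis"
begin

text \<open>Ground set [m] = {1..m}; subsets of [m] are identified with 0/1 vectors.\<close>

definition monotone_setfun :: "nat \<Rightarrow> (nat set \<Rightarrow> real) \<Rightarrow> bool" where
  "monotone_setfun m f \<longleftrightarrow> (\<forall>S T. S \<subseteq> T \<and> T \<subseteq> {1..m} \<longrightarrow> f S \<le> f T)"

definition submodular :: "nat \<Rightarrow> (nat set \<Rightarrow> real) \<Rightarrow> bool" where
  "submodular m f \<longleftrightarrow> (\<forall>S T. S \<subseteq> {1..m} \<and> T \<subseteq> {1..m} \<longrightarrow>
      f (S \<union> T) + f (S \<inter> T) \<le> f S + f T)"

definition prod_prob :: "nat \<Rightarrow> (nat \<Rightarrow> real) \<Rightarrow> nat set \<Rightarrow> real" where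
  "prod_prob m x S = (\<Prod>i\<in>S. x i) * (\<Prod>i\<in>{1..m} - S. 1 - x i)"

definition expect_D :: "nat \<Rightarrow> (nat \<Rightarrow> real) \<Rightarrow> (nat set \<Rightarrow> real) \<Rightarrow> real" where
  "expect_D m x h = (\<Sum>S\<in>Pow {1..m}. prod_prob m x S * h S)"

definition g_fun :: "nat \<Rightarrow> (nat set \<Rightarrow> real) \<Rightarrow> real \<Rightarrow> real \<Rightarrow> (nat \<Rightarrow> real) \<Rightarrow> real" where
  "g_fun m f t \<theta> x = exp (- \<theta> * t) * expect_D m x (\<lambda>S. exp (\<theta> * f S))"

end

theory Submission
  imports Defs
begin

(* Conditioning the product distribution D(x) on the two coordinates a and b
   writes E[h(X)] as a bilinear polynomial in (x_a, x_b) whose coefficients are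
   expectations over the remaining coordinates R = [m] - {a,b}.  Along the line
   x_a + z, x_b - z this is a quadratic in z with leading coefficient
   -E_R[ h(S+a+b) - h(S+a) - h(S+b) + h(S) ], the mixed second difference of h.
   For h = exp(theta f) with theta < 0 and f monotone submodular this mixed
   difference is non-negative, so the quadratic is concave.  Finally the set
   of admissible z is an intersection of intervals, hence convex. *)

definition pprob :: "nat set \<Rightarrow> (nat \<Rightarrow> real) \<Rightarrow> nat set \<Rightarrow> real" where
  "pprob I y S = (\<Prod>i\<in>S. y i) * (\<Prod>i\<in>I - S. 1 - y i)"

definition expect :: "nat set \<Rightarrow> (nat \<Rightarrow> real) \<Rightarrow> (nat set \<Rightarrow> real) \<Rightarrow> real" where
  "expect I y h = (\<Sum>S\<in>Pow I. pprob I y S * h S)"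

lemma expect_D_eq_expect: "expect_D m y h = expect {1..m} y h"
  unfolding expect_D_def expect_def prod_prob_def pprob_def by simp

lemma pprob_insert_out:
  assumes "finite I" "a \<notin> I" "S \<subseteq> I"
  shows "pprob (insert a I) y S = (1 - y a) * pprob I y S"
proof -
  have "insert a I - S = insert a (I - S)" "finite (I - S)" "a \<notin> I - S"
    using assms by auto
  then show ?thesis unfolding pprob_def by (simp add: algebra_simps)
qed

lemma pprob_insert_in:
  assumes "finite I" "a \<notin> I" "S \<subseteq> I"
  shows "pprob (insert a I) y (insert a S) = y a * pprob I y S"
proof -
  have "insert a I - insert a S = I - S" "finite S" "a \<notin> S"
    using assms finite_subset by auto
  then show ?thesis unfolding pprob_def by (simp add: algebra_simps)
qed

lemma expect_insert:
  assumes "finite I" "a \<notin> I"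
  shows "expect (insert a I) y h
           = y a * expect I y (\<lambda>S. h (insert a S)) + (1 - y a) * expect I y h"
proof -
  have disj: "Pow I \<inter> insert a ` Pow I = {}" using assms by auto
  have inj: "inj_on (insert a) (Pow I)" using assms unfolding inj_on_def by auto
  have "expect (insert a I) y h = (\<Sum>S\<in>Pow I. pprob (insert a I) y S * h S)
          + (\<Sum>S\<in>insert a ` Pow I. pprob (insert a I) y S * h S)"
    unfolding expect_def Pow_insert using assms disj by (intro sum.union_disjoint) auto
  also have "(\<Sum>S\<in>insert a ` Pow I. pprob (insert a I) y S * h S)
      = (\<Sum>S\<in>Pow I. pprob (insert a I) y (insert a S) * h (insert a S))"
    using inj by (simp add: sum.reindex)
  also have "\<dots> = (\<Sum>S\<in>Pow I. y a * (pprob I y S * h (insert a S)))"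
    using assms by (intro sum.cong) (auto simp: pprob_insert_in)
  also have "(\<Sum>S\<in>Pow I. pprob (insert a I) y S * h S)
      = (\<Sum>S\<in>Pow I. (1 - y a) * (pprob I y S * h S))"
    using assms by (intro sum.cong) (auto simp: pprob_insert_out)
  finally show ?thesis unfolding expect_def by (simp add: sum_distrib_left)
qed

lemma expect_cong:
  assumes "\<And>i. i \<in> I \<Longrightarrow> y i = y' i"
  shows "expect I y h = expect I y' h"
  unfolding expect_def pprob_def
  by (intro sum.cong refl arg_cong2[where f="(*)"] prod.cong) (use assms in auto)

lemma expect_nonneg:
  assumes "finite I" "\<And>i. i \<in> I \<Longrightarrow> 0 \<le> y i \<and> y i \<le> 1" "\<And>S. S \<subseteq> I \<Longrightarrow> 0 \<le> h S"
  shows "0 \<le> expect I y h"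
  unfolding expect_def pprob_def
  using assms by (intro sum_nonneg mult_nonneg_nonneg prod_nonneg) auto

definition mixed_diff :: "(nat set \<Rightarrow> real) \<Rightarrow> nat \<Rightarrow> nat \<Rightarrow> nat set \<Rightarrow> real" where
  "mixed_diff h a b S = h (insert a (insert b S)) - h (insert a S) - h (insert b S) + h S"

lemma expect_exchange_quadratic:
  assumes R: "finite R" "a \<notin> R" "b \<notin> R" and ab: "a \<noteq> b"
  obtains c d where
    "\<And>z. expect (insert a (insert b R)) (y(a := y a + z, b := y b - z)) h
            = - expect R y (mixed_diff h a b) * z^2 + c * z + d"
proof -
  define P11 where "P11 = expect R y (\<lambda>S. h (insert a (insert b S)))"
  define P10 where "P10 = expect R y (\<lambda>S. h (insert a S))"
  define P01 where "P01 = expect R y (\<lambda>S. h (insert b S))"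
  define P00 where "P00 = expect R y h"
  have D: "expect R y (mixed_diff h a b) = P11 - P10 - P01 + P00"
    unfolding P11_def P10_def P01_def P00_def expect_def mixed_diff_def
    by (simp add: sum.distrib sum_subtractf algebra_simps)
  have bilinear: "expect (insert a (insert b R)) (y(a := y a + z, b := y b - z)) h
      = (y a + z) * ((y b - z) * P11 + (1 - (y b - z)) * P10)
        + (1 - (y a + z)) * ((y b - z) * P01 + (1 - (y b - z)) * P00)" for z
  proof -
    let ?y = "y(a := y a + z, b := y b - z)"
    have same: "expect R ?y k = expect R y k" for k
      using R by (intro expect_cong) auto
    show ?thesis
      using R ab
      by (simp add: expect_insert insert_commute same P11_def P10_def P01_def P00_def)
  qed
  show ?thesis
  proof (rule that)
    fix z
    show "expect (insert a (insert b R)) (y(a := y a + z, b := y b - z)) h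
        = - expect R y (mixed_diff h a b) * z^2
          + (y b * (P11 - P01) + (1 - y b) * (P10 - P00) - y a * (P11 - P10)
             - (1 - y a) * (P01 - P00)) * z
          + (y a * (y b * P11 + (1 - y b) * P10) + (1 - y a) * (y b * P01 + (1 - y b) * P00))"
      unfolding bilinear D by (simp add: power2_eq_square algebra_simps)
  qed
qed

lemma exp_neg_mixed_diff_nonneg:
  fixes \<theta> u \<alpha> \<beta> \<gamma> :: real
  assumes "\<theta> < 0" "0 \<le> \<alpha>" "0 \<le> \<beta>" "\<gamma> \<le> \<alpha> + \<beta>"
  shows "exp (\<theta> * (u + \<alpha>)) + exp (\<theta> * (u + \<beta>)) \<le> exp (\<theta> * (u + \<gamma>)) + exp (\<theta> * u)"
proof -
  have le1: "exp (\<theta> * \<alpha>) \<le> 1" "exp (\<theta> * \<beta>) \<le> 1"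
    using assms by (simp_all add: mult_nonpos_nonneg)
  have prod: "exp (\<theta> * \<alpha>) * exp (\<theta> * \<beta>) \<le> exp (\<theta> * \<gamma>)"
    using assms by (simp add: exp_add[symmetric] distrib_left[symmetric] mult_left_mono_neg)
  have "0 \<le> (1 - exp (\<theta> * \<alpha>)) * (1 - exp (\<theta> * \<beta>))" using le1 by simp
  hence "exp (\<theta> * \<alpha>) + exp (\<theta> * \<beta>) \<le> exp (\<theta> * \<gamma>) + 1"
    using prod by (simp add: algebra_simps)
  hence "exp (\<theta> * u) * (exp (\<theta> * \<alpha>) + exp (\<theta> * \<beta>)) \<le> exp (\<theta> * u) * (exp (\<theta> * \<gamma>) + 1)"
    by simp
  thus ?thesis by (simp add: distrib_left exp_add[symmetric] algebra_simps)
qed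

lemma mixed_diff_exp_nonneg:
  assumes mono: "monotone_setfun m f" and submod: "submodular m f" and "\<theta> < 0"
    and S: "S \<subseteq> {1..m}" "a \<notin> S" "b \<notin> S" and ab: "a \<in> {1..m}" "b \<in> {1..m}" "a \<noteq> b"
  shows "0 \<le> mixed_diff (\<lambda>S. exp (\<theta> * f S)) a b S"
proof -
  have incr_a: "0 \<le> f (insert a S) - f S" and incr_b: "0 \<le> f (insert b S) - f S"
    using mono S ab unfolding monotone_setfun_def by (simp_all add: subset_insertI)
  have "insert a S \<subseteq> {1..m}" "insert b S \<subseteq> {1..m}" using S ab by auto
  then have "f (insert a S \<union> insert b S) + f (insert a S \<inter> insert b S)
               \<le> f (insert a S) + f (insert b S)"
    using submod unfolding submodular_def by blast
  moreover have "insert a S \<union> insert b S = insert a (insert b S)"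
    "insert a S \<inter> insert b S = S" using S ab by auto
  ultimately have "f (insert a (insert b S)) - f S
                     \<le> (f (insert a S) - f S) + (f (insert b S) - f S)"
    by simp
  from exp_neg_mixed_diff_nonneg[OF \<open>\<theta> < 0\<close> incr_a incr_b this, of "f S"]
  show ?thesis unfolding mixed_diff_def by simp
qed

lemma concave_on_quadratic:
  fixes c d e :: real
  assumes "c \<le> 0" "convex S"
  shows "concave_on S (\<lambda>z. c * z^2 + d * z + e)"
  unfolding concave_on_iff
proof (intro conjI assms ballI allI impI)
  fix x y u v :: real assume uv: "0 \<le> u" "0 \<le> v" "u + v = 1"
  then have v: "v = 1 - u" by simp
  have "(c * (u * x + v * y)^2 + d * (u * x + v * y) + e)
          - (u * (c * x^2 + d * x + e) + v * (c * y^2 + d * y + e))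
        = (- c) * u * v * (x - y)^2"
    unfolding v by (simp add: power2_eq_square algebra_simps)
  moreover have "0 \<le> (- c) * u * v * (x - y)^2"
    by (intro mult_nonneg_nonneg) (use uv assms(1) in auto)
  ultimately show "u * (c * x^2 + d * x + e) + v * (c * y^2 + d * y + e)
                     \<le> c * (u *\<^sub>R x + v *\<^sub>R y)^2 + d * (u *\<^sub>R x + v *\<^sub>R y) + e"
    by simp
qed

lemma convex_affine_preimage_unit_interval:
  fixes p q :: "nat \<Rightarrow> real"
  shows "convex {z::real. \<forall>i\<in>I. 0 \<le> p i + q i * z \<and> p i + q i * z \<le> 1}"
proof -
  have intervals: "{z::real. \<forall>i\<in>I. 0 \<le> p i + q i * z \<and> p i + q i * z \<le> 1}
      = (\<Inter>i\<in>I. {z. inner (- q i) z \<le> p i} \<inter> {z. inner (q i) z \<le> 1 - p i})"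
    by (force simp: algebra_simps)
  show ?thesis
    unfolding intervals by (intro convex_INT convex_Int convex_halfspace_le)
qed

text \<open>Only monotonicity and submodularity of f enter the argument.\<close>

theorem claim3p4:
  fixes m :: nat and f :: "nat set \<Rightarrow> real" and t \<theta> :: real
    and x :: "nat \<Rightarrow> real" and a b :: nat
  assumes nonneg: "\<forall>S. S \<subseteq> {1..m} \<longrightarrow> 0 \<le> f S"
    and mono: "monotone_setfun m f"
    and submod: "submodular m f"
    and marg: "\<forall>S i. S \<subseteq> {1..m} \<and> i \<in> {1..m} \<and> i \<notin> S \<longrightarrow>
                 0 \<le> f (insert i S) - f S \<and> f (insert i S) - f S \<le> 1"
    and theta: "\<theta> < 0"
    and x01: "\<forall>i\<in>{1..m}. 0 \<le> x i \<and> x i \<le> 1"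
    and ab: "a \<in> {1..m}" "b \<in> {1..m}" "a \<noteq> b"
  shows "concave_on {z. \<forall>i\<in>{1..m}. 0 \<le> (x(a := x a + z, b := x b - z)) i \<and>
                                     (x(a := x a + z, b := x b - z)) i \<le> 1}
           (\<lambda>z. g_fun m f t \<theta> (x(a := x a + z, b := x b - z)))"
proof -
  define R where "R = {1..m} - {a, b}"
  define h where "h S = exp (\<theta> * f S)" for S
  define K where "K = exp (- \<theta> * t)"
  have split: "{1..m} = insert a (insert b R)" and R: "finite R" "a \<notin> R" "b \<notin> R"
    unfolding R_def using ab by auto
  obtain c d where quad: "\<And>z. expect {1..m} (x(a := x a + z, b := x b - z)) h
                             = - expect R x (mixed_diff h a b) * z^2 + c * z + d"
    using expect_exchange_quadratic[OF R ab(3)] unfolding split by blast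
  have "0 \<le> expect R x (mixed_diff h a b)"
    using R x01 mono submod theta ab unfolding R_def h_def
    by (intro expect_nonneg mixed_diff_exp_nonneg) auto
  moreover have "(x(a := x a + z, b := x b - z)) i
                   = x i + (if i = a then 1 else if i = b then -1 else 0) * z" for z i
    using ab by auto
  ultimately have "concave_on {z. \<forall>i\<in>{1..m}. 0 \<le> (x(a := x a + z, b := x b - z)) i \<and>
                                     (x(a := x a + z, b := x b - z)) i \<le> 1}
      (\<lambda>z. (- K * expect R x (mixed_diff h a b)) * z^2 + (K * c) * z + K * d)"
    unfolding K_def
    by (intro concave_on_quadratic) (simp_all add: convex_affine_preimage_unit_interval)
  moreover have "g_fun m f t \<theta> (x(a := x a + z, b := x b - z))
      = (- K * expect R x (mixed_diff h a b)) * z^2 + (K * c) * z + K * d" for z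
    unfolding g_fun_def expect_D_eq_expect K_def h_def[symmetric] quad
    by (simp add: algebra_simps)
  ultimately show ?thesis by simp
qed

end
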